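(* Let $W$ be a complex vector space and let $A(x_1,x_2)\in\mathrm{Hom}(W,W((x_1))((x_2)))$, $B(x_1,x_2)\in\mathrm{Hom}(W,W((x_2))((x_1)))$, $C(x_0,x_2)\in(\mathrm{Hom}(W,W((x_2))))((x_0))$. If there exists $k\in\mathbb{N}$ such that $$(x_1-x_2)^kA(x_1,x_2)=(x_1-x_2)^kB(x_1,x_2)\quad\text{and}\quad\big((x_1-x_2)^kA(x_1,x_2)\big)|_{x_1=x_2e^{x_0}}=x_2^k(e^{x_0}-1)^kC(x_0,x_2),$$ then $$(x_2z)^{-1}\delta\Big(\frac{x_1-x_2}{x_2z}\Big)A(x_1,x_2)-(x_2z)^{-1}\delta\Big(\frac{x_2-x_1}{-x_2z}\Big)B(x_1,x_2)=x_1^{-1}\delta\Big(\frac{x_2(1+z)}{x_1}\Big)C(\log(1+z),x_2).$$ Conversely, if this last identity holds, then there exists $k\in\mathbb{N}$ satisfying the two displayed conditions above.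
   Context: $\delta(x)=\sum_{n\in\mathbb{Z}}x^n$; binomial convention: $(a+b)^n$ for $n<0$ is expanded in nonnegative powers of the second summand (so $(x_1-x_2)^n$ in nonnegative powers of $x_2$, $(x_2-x_1)^n$ in nonnegative powers of $x_1$, $(1+z)^n$ in nonnegative powers of $z$). $\log(1+z)=\sum_{n\ge1}(-1)^{n-1}z^n/n$, and $C(\log(1+z),x_2)$ is obtained by substituting $x_0=\log(1+z)$. The condition $(x_1-x_2)^kA=(x_1-x_2)^kB$ forces this element into $\mathrm{Hom}(W,W((x_1,x_2)))$, so the substitution $x_1=x_2e^{x_0}$ is defined. *)

theory Defs
  imports "HOL-Computational_Algebra.Formal_Laurent_Series" "HOL-Library.Groups_Big_Fun"
begin

text \<open>
A formal series in two variables x, y with values in W is represented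
by its coefficient function  f :: int => int => 'w,  f m p = coefficient of x^m y^p.
Elements of Hom(W, W[[...]]) are represented by coefficient maps
A :: int => int => 'w => 'w  (coefficient of x1^m x2^p, a linear map on W).
All infinite sums below are sums of finitely supported families (Sum_any);
under the truncation hypotheses of the theorem they are genuinely finite.
\<close>

definition mult2 :: "(complex \<Rightarrow> 'w \<Rightarrow> 'w::ab_group_add) \<Rightarrow> (int \<Rightarrow> int \<Rightarrow> complex)
    \<Rightarrow> (int \<Rightarrow> int \<Rightarrow> 'w) \<Rightarrow> int \<Rightarrow> int \<Rightarrow> 'w" where
  "mult2 scale f g m p = Sum_any (\<lambda>(a, b). scale (f a b) (g (m - a) (p - b)))"

text \<open>(x - y)^n expanded in nonnegative powers of the second summand y:
  sum over i >= 0 of (n choose i) x^(n-i) (-y)^i.\<close>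
definition binom_xy :: "int \<Rightarrow> int \<Rightarrow> int \<Rightarrow> complex" where
  "binom_xy n a b = (if b \<ge> 0 \<and> a = n - b then (of_int n gchoose nat b) * (-1) ^ nat b else 0)"

text \<open>(y - x)^n expanded in nonnegative powers of the second summand x:
  sum over i >= 0 of (n choose i) y^(n-i) (-x)^i; as a series in (x, y).\<close>
definition binom_yx :: "int \<Rightarrow> int \<Rightarrow> int \<Rightarrow> complex" where
  "binom_yx n a b = (if a \<ge> 0 \<and> b = n - a then (of_int n gchoose nat a) * (-1) ^ nat a else 0)"

definition shift_y :: "int \<Rightarrow> (int \<Rightarrow> int \<Rightarrow> 'a::zero) \<Rightarrow> int \<Rightarrow> int \<Rightarrow> 'a" where
  "shift_y r f a b = f a (b - r)"

text \<open>Coefficient of z^r x1^m x2^p in (x2 z)^(-1) delta((x1-x2)/(x2 z)) A(x1,x2) w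
  = sum_n (x1-x2)^n x2^(-n-1) z^(-n-1) A(x1,x2) w; the z^r part has n = -r-1.\<close>
definition delta_term1 :: "(complex \<Rightarrow> 'w \<Rightarrow> 'w::ab_group_add) \<Rightarrow> (int \<Rightarrow> int \<Rightarrow> 'w \<Rightarrow> 'w)
    \<Rightarrow> 'w \<Rightarrow> int \<Rightarrow> int \<Rightarrow> int \<Rightarrow> 'w" where
  "delta_term1 scale A w r m p =
     mult2 scale (shift_y r (binom_xy (- r - 1))) (\<lambda>a b. A a b w) m p"

text \<open>Coefficient of z^r x1^m x2^p in (x2 z)^(-1) delta((x2-x1)/(-x2 z)) B(x1,x2) w
  = sum_n (-1)^n (x2-x1)^n x2^(-n-1) z^(-n-1) B(x1,x2) w; the z^r part has n = -r-1.\<close>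
definition delta_term2 :: "(complex \<Rightarrow> 'w \<Rightarrow> 'w::ab_group_add) \<Rightarrow> (int \<Rightarrow> int \<Rightarrow> 'w \<Rightarrow> 'w)
    \<Rightarrow> 'w \<Rightarrow> int \<Rightarrow> int \<Rightarrow> int \<Rightarrow> 'w" where
  "delta_term2 scale B w r m p =
     mult2 scale (\<lambda>a b. (-1::complex) powi (- r - 1) * shift_y r (binom_yx (- r - 1)) a b)
       (\<lambda>a b. B a b w) m p"

definition log1p_fls :: "complex fls" where
  "log1p_fls = fps_to_fls (fps_ln 1)"

text \<open>C(log(1+z), x2) w, where C j q = coefficient of x0^j x2^q:
  coefficient of z^s x2^q is  sum_j [z^s] (log(1+z))^j * C j q w.\<close>
definition C_log :: "(complex \<Rightarrow> 'w \<Rightarrow> 'w::ab_group_add) \<Rightarrow> (int \<Rightarrow> int \<Rightarrow> 'w \<Rightarrow> 'w)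
    \<Rightarrow> 'w \<Rightarrow> int \<Rightarrow> int \<Rightarrow> 'w" where
  "C_log scale C w s q = Sum_any (\<lambda>j. scale (fls_nth (log1p_fls powi j) s) (C j q w))"

text \<open>Coefficient of z^r x1^m x2^p in x1^(-1) delta(x2(1+z)/x1) C(log(1+z),x2) w
  = sum_n x1^(-n-1) x2^n (1+z)^n C(log(1+z),x2) w; the x1^m part has n = -m-1.\<close>
definition delta_rhs :: "(complex \<Rightarrow> 'w \<Rightarrow> 'w::ab_group_add) \<Rightarrow> (int \<Rightarrow> int \<Rightarrow> 'w \<Rightarrow> 'w)
    \<Rightarrow> 'w \<Rightarrow> int \<Rightarrow> int \<Rightarrow> int \<Rightarrow> 'w" where
  "delta_rhs scale C w r m p =
     (let n = - m - 1 in
      Sum_any (\<lambda>s. scale (fls_nth ((1 + fls_X) powi n) (r - s)) (C_log scale C w s (p - n))))"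

text \<open>Substitution x1 = x2 e^(x0) into a series D(x1,x2) w (coefficient of x1^m x2^p),
  giving the coefficient of x0^j x2^q: sum over m of [x0^j] e^(m x0) * D m (q-m) w.\<close>
definition subst_exp :: "(complex \<Rightarrow> 'w \<Rightarrow> 'w::ab_group_add) \<Rightarrow> (int \<Rightarrow> int \<Rightarrow> 'w)
    \<Rightarrow> int \<Rightarrow> int \<Rightarrow> 'w" where
  "subst_exp scale D j q =
     (if j < 0 then 0 else Sum_any (\<lambda>m. scale (fps_nth (fps_exp (of_int m)) (nat j)) (D m (q - m))))"

text \<open>Coefficient of x0^j x2^q in x2^k (e^(x0) - 1)^k C(x0,x2) w.\<close>
definition exp_rhs :: "(complex \<Rightarrow> 'w \<Rightarrow> 'w::ab_group_add) \<Rightarrow> nat \<Rightarrow> (int \<Rightarrow> int \<Rightarrow> 'w \<Rightarrow> 'w)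
    \<Rightarrow> 'w \<Rightarrow> int \<Rightarrow> int \<Rightarrow> 'w" where
  "exp_rhs scale k C w j q =
     Sum_any (\<lambda>i. scale (fls_nth (fps_to_fls ((fps_exp 1 - 1) ^ k)) i) (C (j - i) (q - int k) w))"

end

theory Submission
  imports Defs
begin

text \<open>
  Everything respects the total degree in \<open>x\<^sub>1, x\<^sub>2\<close>, so one works with one homogeneous
  part at a time: coefficient sequences \<open>a\<close>, \<open>b\<close> of \<open>A\<close>, \<open>B\<close> (vanishing above resp. below) and
  \<open>c\<close> of \<open>C\<close>. The coefficient of \<open>z\<^sup>-\<^sup>n\<^sup>-\<^sup>1\<close> on the left is the difference of the two
  expansions of \<open>(x\<^sub>1 - x\<^sub>2)\<^sup>n\<close> applied to \<open>a\<close> and to \<open>b\<close>. If \<open>(x\<^sub>1 - x\<^sub>2)\<^sup>k\<close> takes both to the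
  same sequence \<open>\<Phi>\<close>, which then has finite support, this is the difference of the two expansions
  of \<open>(x\<^sub>1 - x\<^sub>2)\<^sup>n\<^sup>-\<^sup>k\<close> applied to \<open>\<Phi>\<close>, i.e. a finite combination of the series
  \<open>z\<^sup>-\<^sup>k(1 + z)\<^sup>t\<^sup>-\<^sup>m\<^sup>-\<^sup>1\<close>. Since \<open>z = e\<^sup>x\<^sup>0 - 1\<close> inverts \<open>x\<^sub>0 = log(1 + z)\<close>, the delta identity
  for all \<open>n, m\<close> is equivalent to \<open>c = \<Sum>\<^sub>t \<Phi>\<^sub>t (e\<^sup>x\<^sup>0 - 1)\<^sup>-\<^sup>k e\<^sup>t\<^sup>x\<^sup>0\<close>, which is the
  substitution condition. Conversely, the coefficient of \<open>z\<^sup>-\<^sup>k\<^sup>-\<^sup>1\<close> of the delta identity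
  is the locality condition as soon as \<open>k\<close> exceeds minus the order of \<open>C\<close> in \<open>x\<^sub>0\<close>.
\<close>

unbundle fps_syntax

section \<open>Coefficients of products and compositions of Laurent series\<close>

lemma fls_times_nth_Sum_any:
  fixes f g :: "'a::comm_ring_1 fls"
  shows "(f * g) $$ n = Sum_any (\<lambda>i. f $$ i * g $$ (n - i))"
proof -
  have "(f * g) $$ n = (\<Sum>i=fls_subdegree f..n - fls_subdegree g. f $$ i * g $$ (n - i))"
    by (rule fls_times_nth(2))
  also have "\<dots> = Sum_any (\<lambda>i. f $$ i * g $$ (n - i))"
  proof (rule Sum_any.expand_superset[symmetric])
    show "{i. f $$ i * g $$ (n - i) \<noteq> 0} \<subseteq> {fls_subdegree f..n - fls_subdegree g}"
      using fls_eq0_below_subdegree not_le by fastforce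
  qed simp
  finally show ?thesis .
qed

lemma fls_X_powi_times_nth: "(fls_X powi (- k) * F) $$ s = F $$ (s + k)"
  for F :: "'a::field fls"
  using fls_X_intpow_times_conv_shift(1)[of "- k" F] by simp

lemma fls_subdegree_fps_to_fls_eq_1:
  assumes "H $ 0 = 0" "H $ 1 \<noteq> 0"
  shows "fls_subdegree (fps_to_fls H) = 1"
proof -
  have "subdegree H = 1" using assms by (intro subdegreeI) auto
  then show ?thesis using assms by (auto simp: fls_subdegree_fls_to_fps)
qed

lemma fps_to_fls_powi_nth_below:
  fixes H :: "'a::field fps"
  assumes "H $ 0 = 0" "H $ 1 \<noteq> 0" "j < s"
  shows "(fps_to_fls H powi s) $$ j = 0"
  using assms fls_subdegree_fps_to_fls_eq_1[OF assms(1,2)] by (intro fls_eq0_below_subdegree) simp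

lemma fls_compose_fps_nth_eq_0:
  fixes H :: "'a::field fps"
  assumes H0: "H $ 0 = 0" and H1: "H $ 1 \<noteq> 0" and F: "\<And>s. s \<le> j \<Longrightarrow> F $$ s = 0"
  shows "fls_compose_fps F H $$ j = 0"
proof (cases "F = 0")
  case False
  define e where "e = fls_subdegree F"
  have "j < e" using F[of e] False by (fastforce simp: e_def)
  have "fls_compose_fps F H $$ j
      = Sum_any (\<lambda>i. fps_to_fls (fls_base_factor_to_fps F oo H) $$ i * (fps_to_fls H powi e) $$ (j - i))"
    by (simp add: fls_compose_fps_def e_def fls_times_nth_Sum_any)
  also have "\<dots> = Sum_any (\<lambda>i::int. 0)"
    by (intro Sum_any.cong)
       (use \<open>j < e\<close> fps_to_fls_powi_nth_below[OF H0 H1] in \<open>auto simp: not_less\<close>)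
  finally show ?thesis by simp
qed simp

lemma fls_compose_fps_nth:
  fixes H :: "'a::field fps"
  assumes H0: "H $ 0 = 0" and H1: "H $ 1 \<noteq> 0"
  shows "fls_compose_fps F H $$ j = Sum_any (\<lambda>s. F $$ s * (fps_to_fls H powi s) $$ j)"
proof -
  have Hnz: "H \<noteq> 0" using H1 by auto
  define d where "d = fls_subdegree F"
  define P where "P = (\<Sum>s\<in>{d..j}. fls_const (F $$ s) * fls_X powi s)"
  have P_nth: "P $$ u = (if u \<in> {d..j} then F $$ u else 0)" for u
  proof -
    have "P $$ u = (\<Sum>s\<in>{d..j}. if s = u then F $$ s else 0)"
      unfolding P_def fls_nth_sum by (intro sum.cong) auto
    then show ?thesis by (simp add: sum.delta')
  qed
  have "fls_compose_fps (F - P) H $$ j = 0"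
    by (rule fls_compose_fps_nth_eq_0[OF H0 H1]) (auto simp: P_nth d_def not_le)
  then have "fls_compose_fps F H $$ j = fls_compose_fps P H $$ j"
    by (simp add: fls_compose_fps_diff[OF Hnz H0])
  also have "fls_compose_fps P H = (\<Sum>s\<in>{d..j}. fls_const (F $$ s) * fps_to_fls H powi s)"
    unfolding P_def
    by (induction rule: infinite_finite_induct)
       (auto simp: fls_compose_fps_add[OF Hnz H0] fls_compose_fps_mult[OF Hnz H0]
         fls_compose_fps_powi[OF Hnz H0] simp del: fls_X_power_int)
  also have "\<dots> $$ j = (\<Sum>s\<in>{d..j}. F $$ s * (fps_to_fls H powi s) $$ j)"
    by (simp add: fls_nth_sum)
  also have "\<dots> = Sum_any (\<lambda>s. F $$ s * (fps_to_fls H powi s) $$ j)"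
  proof (rule Sum_any.expand_superset[symmetric])
    show "{s. F $$ s * (fps_to_fls H powi s) $$ j \<noteq> 0} \<subseteq> {d..j}"
    proof
      fix s assume "s \<in> {s. F $$ s * (fps_to_fls H powi s) $$ j \<noteq> 0}"
      then have "F $$ s \<noteq> 0" "(fps_to_fls H powi s) $$ j \<noteq> 0" by auto
      then have "\<not> s < d" "\<not> j < s"
        using fps_to_fls_powi_nth_below[OF H0 H1] by (auto simp: d_def)
      then show "s \<in> {d..j}" by simp
    qed
  qed simp
  finally show ?thesis .
qed

lemma fls_compose_fps_powi_nth_orthogonal:
  fixes G H :: "'a::field fps"
  assumes GH: "G oo H = fps_X" and H0: "H $ 0 = 0" and H1: "H $ 1 \<noteq> 0"
  shows "Sum_any (\<lambda>s. (fps_to_fls G powi i) $$ s * (fps_to_fls H powi s) $$ j) = (if j = i then 1 else 0)"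
proof -
  have Hnz: "H \<noteq> 0" using H1 by auto
  have "Sum_any (\<lambda>s. (fps_to_fls G powi i) $$ s * (fps_to_fls H powi s) $$ j)
      = fls_compose_fps (fps_to_fls G powi i) H $$ j"
    by (rule fls_compose_fps_nth[OF H0 H1, symmetric])
  also have "fls_compose_fps (fps_to_fls G powi i) H = fls_X powi i"
    by (simp add: fls_compose_fps_powi[OF Hnz H0] Hnz H0 GH del: fls_X_power_int)
  finally show ?thesis by simp
qed

section \<open>The series \<open>e\<^sup>z - 1\<close> and \<open>log (1 + z)\<close>\<close>

abbreviation expm1_fps :: "'a::field_char_0 fps" where
  "expm1_fps \<equiv> fps_exp 1 - 1"

abbreviation ln1p_fps :: "'a::field_char_0 fps" where
  "ln1p_fps \<equiv> fps_ln 1"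

abbreviation expm1_fls :: "'a::field_char_0 fls" where
  "expm1_fls \<equiv> fps_to_fls expm1_fps"

lemma expm1_fps_nth_0: "expm1_fps $ 0 = 0"
  and expm1_fps_nth_1: "expm1_fps $ 1 \<noteq> 0"
  and expm1_fps_nonzero: "expm1_fps \<noteq> 0"
  by (auto simp: fps_eq_iff intro!: exI[of _ 1])

lemma ln1p_fps_nth_0: "ln1p_fps $ 0 = 0"
  and ln1p_fps_nth_1: "ln1p_fps $ 1 \<noteq> 0"
  and ln1p_fps_nonzero: "ln1p_fps \<noteq> 0"
  by (auto simp: fps_ln_def fps_eq_iff intro!: exI[of _ 1])

lemma ln1p_compose_expm1: "ln1p_fps oo expm1_fps = (fps_X :: 'a::field_char_0 fps)"
  and expm1_compose_ln1p: "expm1_fps oo ln1p_fps = (fps_X :: 'a fps)"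
  using fps_inv_fps_exp_compose[of "1::'a"] fps_ln_fps_exp_inv[of "1::'a"] by simp_all

definition exp_fls :: "int \<Rightarrow> 'a::field_char_0 fls" where
  "exp_fls t = fps_to_fls (fps_exp (of_int t))"

lemma exp_fls_nth: "exp_fls t $$ j = (if j < 0 then 0 else fps_exp (of_int t) $ nat j)"
  by (simp add: exp_fls_def)

lemma exp_fls_eq_powi: "exp_fls t = (1 + expm1_fls) powi t"
proof -
  have exp_nat: "fps_to_fls (fps_exp 1) ^ n = fps_to_fls (fps_exp (of_nat n :: 'a))" for n
    by (simp add: fps_exp_power_mult flip: fps_to_fls_power)
  show ?thesis
  proof (cases "t \<ge> 0")
    case True
    then show ?thesis using exp_nat[of "nat t"] by (simp add: exp_fls_def power_int_def)
  next
    case False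
    have "fps_to_fls (fps_exp 1) powi t = inverse (fps_to_fls (fps_exp (1::'a) ^ nat (- t)))"
      using False by (simp add: power_int_def fps_to_fls_power power_inverse)
    also have "\<dots> = fps_to_fls (inverse (fps_exp (of_nat (nat (- t)))))"
      by (simp add: fls_inverse_fps_to_fls subdegree_eq_0_iff fps_exp_power_mult)
    also have "inverse (fps_exp (of_nat (nat (- t)))) = fps_exp (of_int t :: 'a)"
      using False by (simp flip: fps_exp_neg)
    finally show ?thesis by (simp add: exp_fls_def)
  qed
qed

lemma one_plus_X_powi_compose_expm1:
  "fls_compose_fps ((1 + fls_X) powi t) expm1_fps = (exp_fls t :: 'a::field_char_0 fls)"
  using expm1_fps_nth_0 expm1_fps_nonzero
  by (simp add: fls_compose_fps_powi fls_compose_fps_add exp_fls_eq_powi)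

lemma exp_fls_compose_ln1p:
  "fls_compose_fps (exp_fls t) ln1p_fps = ((1 + fls_X) powi t :: 'a::field_char_0 fls)"
proof -
  have "fls_compose_fps (1 + expm1_fls) ln1p_fps = (1 + fls_X :: 'a fls)"
    by (simp only: fls_compose_fps_add[OF ln1p_fps_nonzero ln1p_fps_nth_0]
        fls_compose_fps_to_fls[OF ln1p_fps_nonzero ln1p_fps_nth_0] expm1_compose_ln1p
        fls_compose_fps_1 fps_X_to_fls)
  then show ?thesis
    by (simp only: exp_fls_eq_powi fls_compose_fps_powi[OF ln1p_fps_nonzero ln1p_fps_nth_0])
qed

lemma expm1_powi_exp_compose_ln1p:
  "fls_compose_fps (expm1_fls powi (- k) * exp_fls t) ln1p_fps
     = (fls_X powi (- k) * (1 + fls_X) powi t :: 'a::field_char_0 fls)"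
  by (simp only: fls_compose_fps_mult[OF ln1p_fps_nonzero ln1p_fps_nth_0]
      fls_compose_fps_powi[OF ln1p_fps_nonzero ln1p_fps_nth_0]
      fls_compose_fps_to_fls[OF ln1p_fps_nonzero ln1p_fps_nth_0]
      expm1_compose_ln1p exp_fls_compose_ln1p fps_X_to_fls)

lemma X_powi_one_plus_X_compose_expm1:
  "fls_compose_fps (fls_X powi (- k) * (1 + fls_X) powi t) expm1_fps
     = (expm1_fls powi (- k) * exp_fls t :: 'a::field_char_0 fls)"
  unfolding fls_compose_fps_mult[OF expm1_fps_nonzero expm1_fps_nth_0] one_plus_X_powi_compose_expm1
  by (simp only: fls_compose_fps_powi[OF expm1_fps_nonzero expm1_fps_nth_0] fls_compose_fps_X)

section \<open>Alternating binomial coefficients\<close>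

text \<open>\<open>alt_binom n i\<close> is the coefficient of \<open>x\<^sup>n\<^sup>-\<^sup>i y\<^sup>i\<close> in \<open>(x - y)\<^sup>n\<close> expanded in nonnegative
  powers of \<open>y\<close>.\<close>

definition alt_binom :: "int \<Rightarrow> int \<Rightarrow> 'a::field_char_0" where
  "alt_binom n i = (if 0 \<le> i then (of_int n gchoose nat i) * (-1) ^ nat i else 0)"

lemma alt_binom_eq_0_neg: "i < 0 \<Longrightarrow> alt_binom n i = 0"
  by (simp add: alt_binom_def)

lemma alt_binom_of_nat: "alt_binom (int n) (int i) = of_nat (n choose i) * (-1) ^ i"
  by (simp add: alt_binom_def binomial_gbinomial)

lemma alt_binom_eq_0_above: "int n < i \<Longrightarrow> alt_binom (int n) i = 0"
  using alt_binom_of_nat[of n "nat i"] by (simp add: binomial_eq_0)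

lemma gbinomial_minus_of_nat_minus_1:
  "((- of_nat l - 1 :: 'a::field_char_0) gchoose i) = (-1) ^ i * of_nat ((i + l) choose i)"
proof -
  have "((- of_nat l - 1 :: 'a) gchoose i) = (-1) ^ i * ((of_nat i - (- of_nat l - 1) - 1) gchoose i)"
    by (rule gbinomial_negated_upper)
  also have "(of_nat i - (- of_nat l - 1) - 1 :: 'a) = of_nat (i + l)" by simp
  finally show ?thesis by (simp add: binomial_gbinomial)
qed

lemma alt_binom_minus_of_nat_minus_1:
  "alt_binom (- int l - 1) (int i) = of_nat ((i + l) choose i)"
  by (simp add: alt_binom_def gbinomial_minus_of_nat_minus_1)

lemma alt_binom_Vandermonde:
  "Sum_any (\<lambda>i. alt_binom a i * alt_binom b (u - i)) = (alt_binom (a + b) u :: 'a::field_char_0)"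
proof (cases "u < 0")
  case True
  then have zero: "(\<lambda>i. alt_binom a i * alt_binom b (u - i)) = (\<lambda>i. 0 :: 'a)"
    by (auto simp: fun_eq_iff alt_binom_def)
  show ?thesis
    unfolding zero using True by (simp add: alt_binom_eq_0_neg)
next
  case False
  then obtain n where u: "u = int n" by (metis nonneg_int_cases not_less)
  have "Sum_any (\<lambda>i. alt_binom a i * alt_binom b (u - i))
      = (\<Sum>i\<in>int ` {0..n}. alt_binom a i * (alt_binom b (u - i) :: 'a))"
  proof (rule Sum_any.expand_superset)
    show "{i. alt_binom a i * alt_binom b (u - i) \<noteq> (0::'a)} \<subseteq> int ` {0..n}"
    proof
      fix i assume "i \<in> {i. alt_binom a i * alt_binom b (u - i) \<noteq> (0::'a)}"
      then have "0 \<le> i" "0 \<le> u - i" by (auto simp: alt_binom_def split: if_splits)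
      then show "i \<in> int ` {0..n}" using u by (auto intro!: image_eqI[of _ _ "nat i"])
    qed
  qed simp
  also have "\<dots> = (\<Sum>i\<in>{0..n}. alt_binom a (int i) * alt_binom b (u - int i))"
    by (simp add: sum.reindex)
  also have "\<dots> = (\<Sum>i\<in>{0..n}. ((of_int a gchoose i) * (of_int b gchoose (n - i))) * (-1) ^ n)"
  proof (rule sum.cong)
    fix i assume "i \<in> {0..n}"
    then have i: "i \<le> n" by simp
    then show "alt_binom a (int i) * alt_binom b (u - int i)
        = ((of_int a gchoose i) * (of_int b gchoose (n - i))) * (-1) ^ n"
      using u by (simp add: alt_binom_def algebra_simps nat_diff_distrib flip: power_add)
  qed simp
  also have "\<dots> = ((of_int a + of_int b) gchoose n) * (-1) ^ n"
    by (simp add: sum_distrib_right[symmetric] gbinomial_Vandermonde)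
  also have "\<dots> = alt_binom (a + b) u" by (simp add: alt_binom_def u)
  finally show ?thesis .
qed

lemma alt_binom_symmetric:
  "alt_binom (int k) (int k - l) = (-1) ^ k * (alt_binom (int k) l :: 'a::field_char_0)"
proof (cases "0 \<le> l \<and> l \<le> int k")
  case True
  then obtain i where l: "l = int i" "i \<le> k" by (metis nonneg_int_cases of_nat_le_iff)
  have "int k - l = int (k - i)" using l by simp
  then have "alt_binom (int k) (int k - l) = of_nat (k choose (k - i)) * ((-1::'a) ^ (k - i))"
    by (simp only: alt_binom_of_nat)
  also have "(-1::'a) ^ (k - i) = (-1) ^ k * (-1) ^ i"
    using l by (cases "even i") (simp_all add: power_diff)
  finally show ?thesis
    using l by (simp add: alt_binom_of_nat binomial_symmetric[OF l(2), symmetric])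
next
  case False
  then show ?thesis
    by (auto simp: alt_binom_eq_0_neg alt_binom_eq_0_above not_le)
qed

lemma one_plus_X_powi_nth:
  "((1 + fls_X) powi t) $$ s = (if s < 0 then 0 else (of_int t :: 'a::field_char_0) gchoose nat s)"
  by (simp add: one_plus_fls_X_powi_eq)

text \<open>The expansions of \<open>(x\<^sub>1 - x\<^sub>2)\<^sup>N\<close> in nonnegative powers of \<open>x\<^sub>2\<close> and of \<open>x\<^sub>1\<close> agree
  for \<open>N \<ge> 0\<close>; in general their coefficients of \<open>x\<^sub>1\<^sup>s x\<^sub>2\<^sup>N\<^sup>-\<^sup>s\<close> differ by a coefficient of
  \<open>(1 + z)\<^sup>-\<^sup>s\<^sup>-\<^sup>1\<close>, which is what turns the difference into a delta function.\<close>

lemma alt_binom_expansions_diff: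
  "alt_binom N (N - s) - (-1) powi N * alt_binom N s
     = (((1 + fls_X) powi (- s - 1)) $$ (- N - 1) :: 'a::field_char_0)"
proof (cases "N \<ge> 0")
  case True
  then obtain n where N: "N = int n" by (metis nonneg_int_cases)
  show ?thesis
    using alt_binom_symmetric[of n s] by (simp add: N one_plus_X_powi_nth)
next
  case False
  then obtain l where N: "N = - int l - 1" using that[of "nat (- N - 1)"] by simp
  show ?thesis
  proof (cases "s \<ge> 0")
    case True
    then obtain m where s: "s = int m" by (metis nonneg_int_cases)
    have "(-1::'a) powi N = - ((-1) ^ l)"
      by (cases "even l") (simp_all add: N power_int_diff power_int_minus)
    moreover have "(l + m) choose l = (m + l) choose m"
      by (metis add.commute binomial_symmetric add_diff_cancel_left' le_add1)
    ultimately show ?thesis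
      using alt_binom_minus_of_nat_minus_1[of l m]
      by (simp add: N s alt_binom_eq_0_neg one_plus_X_powi_nth gbinomial_minus_of_nat_minus_1)
  next
    case False
    then obtain m where s: "s = - int m - 1" using that[of "nat (- s - 1)"] by simp
    have "- s - 1 = int m" "- N - 1 = int l" using N s by simp_all
    then have rhs: "((1 + fls_X) powi (- s - 1)) $$ (- N - 1) = (of_nat (m choose l) :: 'a)"
      unfolding one_plus_X_powi_nth by (simp add: binomial_gbinomial)
    show ?thesis
    proof (cases "l \<le> m")
      case True
      then have "N - s = int (m - l)" using N s by simp
      then have "alt_binom N (N - s) = alt_binom (- int l - 1) (int (m - l))"
        by (simp only: N)
      also have "\<dots> = (of_nat (m choose l) :: 'a)"
        unfolding alt_binom_minus_of_nat_minus_1 using True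
        by (simp add: binomial_symmetric[OF True, symmetric])
      finally have "alt_binom N (N - s) = (of_nat (m choose l) :: 'a)" .
      then show ?thesis using rhs by (simp add: s alt_binom_eq_0_neg)
    next
      case False
      then show ?thesis
        using rhs by (simp add: N s alt_binom_eq_0_neg binomial_eq_0)
    qed
  qed
qed

section \<open>Laurent series with coefficients in a vector space\<close>

lemma Sum_any_on_graph:
  assumes "\<And>a b. a \<noteq> \<phi> b \<Longrightarrow> F (a, b) = (0::'c::comm_monoid_add)"
  shows "Sum_any F = Sum_any (\<lambda>b. F (\<phi> b, b))"
proof -
  let ?g = "\<lambda>b. (\<phi> b, b)"
  have inj: "inj_on ?g X" for X by (rule inj_onI) simp
  have supp: "{x. F x \<noteq> 0} = ?g ` {b. F (\<phi> b, b) \<noteq> 0}"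
    using assms by force
  show ?thesis
  proof (cases "finite {b. F (\<phi> b, b) \<noteq> 0}")
    case True
    then have "Sum_any F = sum F (?g ` {b. F (\<phi> b, b) \<noteq> 0})"
      using supp by (intro Sum_any.expand_superset) auto
    also have "\<dots> = sum (\<lambda>b. F (\<phi> b, b)) {b. F (\<phi> b, b) \<noteq> 0}"
      by (simp add: sum.reindex[OF inj])
    also have "\<dots> = Sum_any (\<lambda>b. F (\<phi> b, b))"
      using True by (intro Sum_any.expand_superset[symmetric]) auto
    finally show ?thesis .
  next
    case False
    then have "infinite {x. F x \<noteq> 0}"
      unfolding supp using finite_imageD[OF _ inj] by blast
    then show ?thesis using False by simp
  qed
qed

lemma Sum_any_int_shift: "Sum_any (\<lambda>i. h (i + c)) = Sum_any (h :: int \<Rightarrow> 'c::comm_monoid_add)"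
  by (rule sym, rule Sum_any.reindex_cong[of "\<lambda>i. i + c"]) (auto simp: bij_plus_right o_def)

lemma Sum_any_int_reflect: "Sum_any (\<lambda>i. h (c - i)) = Sum_any (h :: int \<Rightarrow> 'c::comm_monoid_add)"
  by (rule sym, rule Sum_any.reindex_cong[of "(-) c"]) (auto simp: bij_diff o_def)

context vector_space
begin

lemma Sum_any_scale_swap:
  assumes "finite I" "finite J"
    and support: "\<And>i j. f i * g i j \<noteq> 0 \<Longrightarrow> v j \<noteq> 0 \<Longrightarrow> i \<in> I \<and> j \<in> J"
  shows "Sum_any (\<lambda>i. scale (f i) (Sum_any (\<lambda>j. scale (g i j) (v j))))
       = Sum_any (\<lambda>j. scale (Sum_any (\<lambda>i. f i * g i j)) (v j))"
proof -
  have inner: "scale (f i) (Sum_any (\<lambda>j. scale (g i j) (v j))) = (\<Sum>j\<in>J. scale (f i * g i j) (v j))" for i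
  proof (cases "f i = 0")
    case False
    then have "Sum_any (\<lambda>j. scale (g i j) (v j)) = (\<Sum>j\<in>J. scale (g i j) (v j))"
      using support by (intro Sum_any.expand_superset[OF \<open>finite J\<close>]) auto
    then show ?thesis by (simp add: scale_sum_right)
  qed simp
  have outer: "scale (Sum_any (\<lambda>i. f i * g i j)) (v j) = (\<Sum>i\<in>I. scale (f i * g i j) (v j))" for j
  proof (cases "v j = 0")
    case False
    then have "Sum_any (\<lambda>i. f i * g i j) = (\<Sum>i\<in>I. f i * g i j)"
      using support by (intro Sum_any.expand_superset[OF \<open>finite I\<close>]) auto
    then show ?thesis by (simp add: scale_sum_left)
  qed simp
  have "Sum_any (\<lambda>i. scale (f i) (Sum_any (\<lambda>j. scale (g i j) (v j))))
      = (\<Sum>i\<in>I. \<Sum>j\<in>J. scale (f i * g i j) (v j))"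
    unfolding inner using support
    by (intro Sum_any.expand_superset[OF \<open>finite I\<close>]) (force intro: sum.neutral)
  also have "\<dots> = (\<Sum>j\<in>J. \<Sum>i\<in>I. scale (f i * g i j) (v j))"
    by (rule sum.swap)
  also have "\<dots> = Sum_any (\<lambda>j. scale (Sum_any (\<lambda>i. f i * g i j)) (v j))"
    unfolding outer using support
    by (intro Sum_any.expand_superset[symmetric, OF \<open>finite J\<close>]) (force intro: sum.neutral)
  finally show ?thesis .
qed

lemma Sum_any_scale_diff:
  assumes "finite {t. v t \<noteq> 0}"
  shows "Sum_any (\<lambda>t. scale (f t) (v t)) - Sum_any (\<lambda>t. scale (g t) (v t))
       = Sum_any (\<lambda>t. scale (f t - g t) (v t))"
proof -
  have sum: "Sum_any (\<lambda>t. scale (h t) (v t)) = (\<Sum>t | v t \<noteq> 0. scale (h t) (v t))" for h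
    using assms by (intro Sum_any.expand_superset) auto
  show ?thesis
    unfolding sum by (simp add: sum_subtractf scale_left_diff_distrib)
qed

end

locale series_space = vector_space scale for scale :: "'a::field \<Rightarrow> 'b::ab_group_add \<Rightarrow> 'b"
begin

text \<open>A map \<open>c :: int \<Rightarrow> 'b\<close> vanishing below some index stands for the Laurent series
  \<open>\<Sum>\<^sub>j c j z\<^sup>j\<close> with vector coefficients; the operations below are its product with a scalar
  Laurent series, the substitution \<open>z := H\<close>, and the combination \<open>\<Sum>\<^sub>t \<Phi> t \<cdot> g t\<close>.
  As \<open>Sum_any\<close> is \<open>0\<close> on infinite supports, their laws need boundedness or finiteness
  hypotheses. They live in a locale of their own because definitions made in the context
  \<open>vector_space\<close> would be shadowed by the global interpretation for real vector spaces.\<close>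

definition series_mult :: "'a fls \<Rightarrow> (int \<Rightarrow> 'b) \<Rightarrow> int \<Rightarrow> 'b" where
  "series_mult f c j = Sum_any (\<lambda>l. scale (f $$ l) (c (j - l)))"

definition series_subst :: "'a fps \<Rightarrow> (int \<Rightarrow> 'b) \<Rightarrow> int \<Rightarrow> 'b" where
  "series_subst H c s = Sum_any (\<lambda>j. scale ((fps_to_fls H powi j) $$ s) (c j))"

definition series_comb :: "(int \<Rightarrow> 'a fls) \<Rightarrow> (int \<Rightarrow> 'b) \<Rightarrow> int \<Rightarrow> 'b" where
  "series_comb g \<Phi> j = Sum_any (\<lambda>t. scale (g t $$ j) (\<Phi> t))"

lemma series_mult_1: "series_mult 1 c = (c :: int \<Rightarrow> 'b)"
proof
  fix j
  have "series_mult 1 c j = Sum_any (\<lambda>l::int. if l = 0 then c j else 0)"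
    unfolding series_mult_def by (intro Sum_any.cong) simp
  then show "series_mult 1 c j = c j" by simp
qed

lemma series_mult_series_mult:
  fixes c :: "int \<Rightarrow> 'b"
  assumes below: "\<And>j. j < J \<Longrightarrow> c j = 0"
  shows "series_mult f (series_mult g c) = series_mult (f * g) c"
proof
  fix j
  define a b where "a = fls_subdegree f" and "b = fls_subdegree g"
  have shift: "Sum_any (\<lambda>l. scale (g $$ l) (c (j - i - l)))
      = Sum_any (\<lambda>u. scale (g $$ (u - i)) (c (j - u)))" for i
    using Sum_any_int_shift[of "\<lambda>u. scale (g $$ (u - i)) (c (j - u))" i]
    by (simp add: algebra_simps)
  have "series_mult f (series_mult g c) j
      = Sum_any (\<lambda>i. scale (f $$ i) (Sum_any (\<lambda>u. scale (g $$ (u - i)) (c (j - u)))))"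
    unfolding series_mult_def shift ..
  also have "\<dots> = Sum_any (\<lambda>u. scale (Sum_any (\<lambda>i. f $$ i * g $$ (u - i))) (c (j - u)))"
  proof (rule Sum_any_scale_swap[of "{a..j - J - b}" "{a + b..j - J}"])
    fix i u assume "f $$ i * g $$ (u - i) \<noteq> 0" "c (j - u) \<noteq> 0"
    then have "a \<le> i" "b \<le> u - i" "J \<le> j - u"
      using below[of "j - u"] by (auto simp: a_def b_def not_less[symmetric])
    then show "i \<in> {a..j - J - b} \<and> u \<in> {a + b..j - J}" by auto
  qed auto
  also have "\<dots> = series_mult (f * g) c j"
    by (simp add: series_mult_def fls_times_nth_Sum_any)
  finally show "series_mult f (series_mult g c) j = series_mult (f * g) c j" .
qed

lemma series_mult_eq_0_below:
  fixes c :: "int \<Rightarrow> 'b"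
  assumes below: "\<And>j. j < J \<Longrightarrow> c j = 0" and j: "j < J + fls_subdegree f"
  shows "series_mult f c j = 0"
proof -
  have "scale (f $$ l) (c (j - l)) = 0" for l
    using below[of "j - l"] fls_eq0_below_subdegree[of l f] j by (cases "l < fls_subdegree f") auto
  then show ?thesis
    unfolding series_mult_def by (simp only: Sum_any.neutral)
qed

lemma series_subst_eq_0_below:
  fixes c :: "int \<Rightarrow> 'b"
  assumes H0: "H $ 0 = 0" and H1: "H $ 1 \<noteq> 0"
    and below: "\<And>j. j < J \<Longrightarrow> c j = 0" and s: "s < J"
  shows "series_subst H c s = 0"
proof -
  have "scale ((fps_to_fls H powi j) $$ s) (c j) = 0" for j
    using below[of j] fps_to_fls_powi_nth_below[OF H0 H1, of s j] s by (cases "s < j") auto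
  then show ?thesis
    unfolding series_subst_def by (simp only: Sum_any.neutral)
qed

lemma series_subst_inverse:
  fixes c :: "int \<Rightarrow> 'b"
  assumes GH: "G oo H = fps_X" and H0: "H $ 0 = 0" and H1: "H $ 1 \<noteq> 0"
    and G0: "G $ 0 = 0" and G1: "G $ 1 \<noteq> 0"
    and below: "\<And>j. j < J \<Longrightarrow> c j = 0"
  shows "series_subst H (series_subst G c) = c"
proof
  fix j
  have "series_subst H (series_subst G c) j
      = Sum_any (\<lambda>i. scale (Sum_any (\<lambda>s. (fps_to_fls H powi s) $$ j * (fps_to_fls G powi i) $$ s)) (c i))"
    unfolding series_subst_def
  proof (rule Sum_any_scale_swap[of "{J..j}" "{J..j}"])
    fix s i assume "(fps_to_fls H powi s) $$ j * (fps_to_fls G powi i) $$ s \<noteq> 0" "c i \<noteq> 0"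
    then have "s \<le> j" "i \<le> s" "J \<le> i"
      using fps_to_fls_powi_nth_below[OF H0 H1, of j s] fps_to_fls_powi_nth_below[OF G0 G1, of s i]
        below[of i] by (auto simp: not_less[symmetric])
    then show "s \<in> {J..j} \<and> i \<in> {J..j}" by auto
  qed auto
  also have "\<dots> = Sum_any (\<lambda>i. if j = i then c i else 0)"
    using fls_compose_fps_powi_nth_orthogonal[OF GH H0 H1] by (intro Sum_any.cong) (simp add: mult.commute)
  finally show "series_subst H (series_subst G c) j = c j" by simp
qed

lemma series_mult_comb:
  fixes \<Phi> :: "int \<Rightarrow> 'b"
  assumes T: "finite {t. \<Phi> t \<noteq> 0}"
  shows "series_mult f (series_comb g \<Phi>) = series_comb (\<lambda>t. f * g t) \<Phi>"
proof
  fix j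
  let ?I = "\<Union>t\<in>{t. \<Phi> t \<noteq> 0}. {fls_subdegree f..j - fls_subdegree (g t)}"
  have "series_mult f (series_comb g \<Phi>) j
      = Sum_any (\<lambda>t. scale (Sum_any (\<lambda>l. f $$ l * g t $$ (j - l))) (\<Phi> t))"
    unfolding series_mult_def series_comb_def
  proof (rule Sum_any_scale_swap[of ?I "{t. \<Phi> t \<noteq> 0}"])
    fix l t assume "f $$ l * g t $$ (j - l) \<noteq> 0" "\<Phi> t \<noteq> 0"
    then show "l \<in> ?I \<and> t \<in> {t. \<Phi> t \<noteq> 0}"
      using fls_eq0_below_subdegree[of l f] fls_eq0_below_subdegree[of "j - l" "g t"]
      by (auto simp: not_less[symmetric])
  qed (use T in auto)
  then show "series_mult f (series_comb g \<Phi>) j = series_comb (\<lambda>t. f * g t) \<Phi> j"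
    by (simp add: series_comb_def fls_times_nth_Sum_any)
qed

lemma series_subst_comb:
  fixes \<Phi> :: "int \<Rightarrow> 'b"
  assumes H0: "H $ 0 = 0" and H1: "H $ 1 \<noteq> 0" and T: "finite {t. \<Phi> t \<noteq> 0}"
  shows "series_subst H (series_comb g \<Phi>) = series_comb (\<lambda>t. fls_compose_fps (g t) H) \<Phi>"
proof
  fix s
  let ?I = "\<Union>t\<in>{t. \<Phi> t \<noteq> 0}. {fls_subdegree (g t)..s}"
  have "series_subst H (series_comb g \<Phi>) s
      = Sum_any (\<lambda>t. scale (Sum_any (\<lambda>j. (fps_to_fls H powi j) $$ s * g t $$ j)) (\<Phi> t))"
    unfolding series_subst_def series_comb_def
  proof (rule Sum_any_scale_swap[of ?I "{t. \<Phi> t \<noteq> 0}"])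
    fix j t assume "(fps_to_fls H powi j) $$ s * g t $$ j \<noteq> 0" "\<Phi> t \<noteq> 0"
    then show "j \<in> ?I \<and> t \<in> {t. \<Phi> t \<noteq> 0}"
      using fps_to_fls_powi_nth_below[OF H0 H1, of s j] fls_eq0_below_subdegree[of j "g t"]
      by (auto simp: not_less[symmetric])
  qed (use T in auto)
  then show "series_subst H (series_comb g \<Phi>) s = series_comb (\<lambda>t. fls_compose_fps (g t) H) \<Phi> s"
    by (simp add: series_comb_def fls_compose_fps_nth[OF H0 H1] mult.commute)
qed

end

section \<open>The two expansions of \<open>(x\<^sub>1 - x\<^sub>2)\<^sup>n\<close>\<close>

locale series_space_char_0 = series_space scale
  for scale :: "'a::field_char_0 \<Rightarrow> 'b::ab_group_add \<Rightarrow> 'b"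
begin

text \<open>If \<open>c\<close> lists the coefficients of \<open>x\<^sub>1\<^sup>t x\<^sub>2\<^sup>q\<^sup>-\<^sup>t\<close> of a series, these list those of
  \<open>(x\<^sub>1 - x\<^sub>2)\<^sup>n\<close> times it, with \<open>(x\<^sub>1 - x\<^sub>2)\<^sup>n\<close> expanded in nonnegative powers of \<open>x\<^sub>2\<close>
  resp. of \<open>x\<^sub>1\<close>.\<close>

definition binom_conv :: "int \<Rightarrow> (int \<Rightarrow> 'b) \<Rightarrow> int \<Rightarrow> 'b" where
  "binom_conv n c x = Sum_any (\<lambda>i. scale (alt_binom n i) (c (x - n + i)))"

definition binom_conv_rev :: "int \<Rightarrow> (int \<Rightarrow> 'b) \<Rightarrow> int \<Rightarrow> 'b" where
  "binom_conv_rev n c x = Sum_any (\<lambda>i. scale ((-1) powi n * alt_binom n i) (c (x - i)))"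

lemma binom_conv_eq_0_above:
  assumes "\<And>t. T < t \<Longrightarrow> c t = 0" "T + n < x"
  shows "binom_conv n c x = 0"
proof -
  have "scale (alt_binom n i) (c (x - n + i)) = 0" for i
    using assms alt_binom_eq_0_neg[of i n] by (cases "i < 0") auto
  then show ?thesis
    unfolding binom_conv_def by (simp only: Sum_any.neutral)
qed

lemma binom_conv_of_nat_eq_0_below:
  assumes "\<And>t. t < M \<Longrightarrow> c t = 0" "x < M"
  shows "binom_conv (int k) c x = 0"
proof -
  have "scale (alt_binom (int k) i) (c (x - int k + i)) = 0" for i
    using assms alt_binom_eq_0_above[of k i] by (cases "int k < i") auto
  then show ?thesis
    unfolding binom_conv_def by (simp only: Sum_any.neutral)
qed

lemma binom_conv_of_nat_eq_rev: "binom_conv (int k) c = binom_conv_rev (int k) c"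
proof
  fix x
  have "binom_conv (int k) c x = Sum_any (\<lambda>i. scale (alt_binom (int k) (int k - i)) (c (x - i)))"
    unfolding binom_conv_def
    using Sum_any_int_reflect[of "\<lambda>i. scale (alt_binom (int k) (int k - i)) (c (x - i))" "int k"]
    by (simp add: algebra_simps)
  then show "binom_conv (int k) c x = binom_conv_rev (int k) c x"
    by (simp add: binom_conv_rev_def alt_binom_symmetric)
qed

lemma binom_conv_binom_conv:
  assumes above: "\<And>t. T < t \<Longrightarrow> c t = 0"
  shows "binom_conv a (binom_conv b c) = binom_conv (a + b) c"
proof
  fix x
  let ?U = "{0..T - x + a + b}"
  have shift: "binom_conv b c (x - a + i) = Sum_any (\<lambda>u. scale (alt_binom b (u - i)) (c (x - a - b + u)))" for i
    unfolding binom_conv_def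
    using Sum_any_int_shift[of "\<lambda>u. scale (alt_binom b (u - i)) (c (x - a - b + u))" i]
    by (simp add: algebra_simps)
  have "binom_conv a (binom_conv b c) x
      = Sum_any (\<lambda>u. scale (Sum_any (\<lambda>i. alt_binom a i * alt_binom b (u - i))) (c (x - a - b + u)))"
    unfolding binom_conv_def[of a] shift
  proof (rule Sum_any_scale_swap[of ?U ?U])
    fix i u assume "alt_binom a i * alt_binom b (u - i) \<noteq> 0" "c (x - a - b + u) \<noteq> 0"
    then have "\<not> i < 0" "\<not> u - i < 0" "\<not> T < x - a - b + u"
      using alt_binom_eq_0_neg[of i a] alt_binom_eq_0_neg[of "u - i" b] above by auto
    then show "i \<in> ?U \<and> u \<in> ?U" by auto
  qed auto
  then show "binom_conv a (binom_conv b c) x = binom_conv (a + b) c x"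
    by (simp add: binom_conv_def alt_binom_Vandermonde algebra_simps)
qed

lemma binom_conv_rev_binom_conv_rev:
  assumes below: "\<And>t. t < M \<Longrightarrow> c t = 0"
  shows "binom_conv_rev a (binom_conv_rev b c) = binom_conv_rev (a + b) c"
proof
  fix x
  let ?U = "{0..x - M}"
  have shift: "binom_conv_rev b c (x - i)
      = Sum_any (\<lambda>u. scale ((-1) powi b * alt_binom b (u - i)) (c (x - u)))" for i
    unfolding binom_conv_rev_def
    using Sum_any_int_shift[of "\<lambda>u. scale ((-1) powi b * alt_binom b (u - i)) (c (x - u))" i]
    by (simp add: algebra_simps)
  have "binom_conv_rev a (binom_conv_rev b c) x
      = Sum_any (\<lambda>u. scale (Sum_any (\<lambda>i. ((-1) powi a * alt_binom a i) * ((-1) powi b * alt_binom b (u - i))))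
          (c (x - u)))"
    unfolding binom_conv_rev_def[of a] shift
  proof (rule Sum_any_scale_swap[of ?U ?U])
    fix i u
    assume "((-1) powi a * alt_binom a i) * ((-1) powi b * alt_binom b (u - i)) \<noteq> 0" "c (x - u) \<noteq> 0"
    then have "\<not> i < 0" "\<not> u - i < 0" "\<not> x - u < M"
      using alt_binom_eq_0_neg[of i a] alt_binom_eq_0_neg[of "u - i" b] below by auto
    then show "i \<in> ?U \<and> u \<in> ?U" by auto
  qed auto
  also have "\<dots> = Sum_any (\<lambda>u. scale ((-1) powi (a + b) * alt_binom (a + b) u) (c (x - u)))"
  proof (intro Sum_any.cong arg_cong2[where f = scale] refl)
    fix u
    have "finite {i. alt_binom a i * alt_binom b (u - i) \<noteq> (0::'a)}"
      by (rule finite_subset[of _ "{0..u}"]) (auto simp: alt_binom_def split: if_splits)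
    then have "(-1) powi (a + b) * Sum_any (\<lambda>i. alt_binom a i * alt_binom b (u - i))
        = Sum_any (\<lambda>i. (-1) powi (a + b) * (alt_binom a i * alt_binom b (u - i)) :: 'a)"
      by (rule Sum_any_right_distrib)
    also have "\<dots> = Sum_any (\<lambda>i. ((-1) powi a * alt_binom a i) * ((-1) powi b * alt_binom b (u - i)))"
      by (intro Sum_any.cong) (simp add: power_int_add mult_ac)
    finally show "Sum_any (\<lambda>i. ((-1) powi a * alt_binom a i) * ((-1) powi b * alt_binom b (u - i)))
        = (-1) powi (a + b) * (alt_binom (a + b) u :: 'a)"
      by (simp only: alt_binom_Vandermonde)
  qed
  finally show "binom_conv_rev a (binom_conv_rev b c) x = binom_conv_rev (a + b) c x"
    by (simp only: binom_conv_rev_def)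
qed

lemma binom_conv_diff_rev:
  assumes supp: "finite {t. c t \<noteq> 0}"
  shows "binom_conv n c m - binom_conv_rev n c m = series_comb (\<lambda>t. (1 + fls_X) powi (t - m - 1)) c (- n - 1)"
proof -
  have conv: "binom_conv n c m = Sum_any (\<lambda>t. scale (alt_binom n (n - (m - t))) (c t))"
    unfolding binom_conv_def
    using Sum_any_int_shift[of "\<lambda>t. scale (alt_binom n (n - (m - t))) (c t)" "m - n"]
    by (simp add: algebra_simps)
  have rev: "binom_conv_rev n c m = Sum_any (\<lambda>t. scale ((-1) powi n * alt_binom n (m - t)) (c t))"
    unfolding binom_conv_rev_def
    using Sum_any_int_reflect[of "\<lambda>t. scale ((-1) powi n * alt_binom n (m - t)) (c t)" m]
    by simp
  show ?thesis
    unfolding conv rev Sum_any_scale_diff[OF supp] series_comb_def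
  proof (intro Sum_any.cong arg_cong2[where f = scale] refl)
    fix t
    show "alt_binom n (n - (m - t)) - (-1) powi n * alt_binom n (m - t)
        = ((1 + fls_X) powi (t - m - 1)) $$ (- n - 1)"
      using alt_binom_expansions_diff[of n "m - t"] by simp
  qed
qed

lemma binom_conv_finite_support:
  assumes above: "\<And>t. T < t \<Longrightarrow> a t = 0" and below: "\<And>t. t < M \<Longrightarrow> b t = 0"
    and eq: "binom_conv (int k) a = binom_conv (int k) b"
  shows "finite {t. binom_conv (int k) a t \<noteq> 0}"
proof (rule finite_subset[of _ "{M..T + int k}"])
  show "{t. binom_conv (int k) a t \<noteq> 0} \<subseteq> {M..T + int k}"
  proof
    fix t assume t: "t \<in> {t. binom_conv (int k) a t \<noteq> 0}"
    then have "\<not> T + int k < t"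
      using binom_conv_eq_0_above[of T a, OF above] by blast
    moreover have "\<not> t < M"
      using t binom_conv_of_nat_eq_0_below[of M b, OF below, of t k] unfolding eq by auto
    ultimately show "t \<in> {M..T + int k}" by simp
  qed
qed simp

text \<open>Both expansions of \<open>(x\<^sub>1 - x\<^sub>2)\<^sup>n\<close> factor through the common \<open>(x\<^sub>1 - x\<^sub>2)\<^sup>k\<close>-multiple of
  \<open>a\<close> and \<open>b\<close>, which has finite support, so \<open>binom_conv_diff_rev\<close> applies to it.\<close>

lemma binom_conv_diff_rev_of_locality:
  assumes above: "\<And>t. T < t \<Longrightarrow> a t = 0" and below: "\<And>t. t < M \<Longrightarrow> b t = 0"
    and eq: "binom_conv (int k) a = binom_conv (int k) b"
  shows "binom_conv n a m - binom_conv_rev n b m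
       = series_comb (\<lambda>t. fls_X powi (- int k) * (1 + fls_X) powi (t - m - 1)) (binom_conv (int k) a) (- n - 1)"
proof -
  have "binom_conv n a = binom_conv (n - int k) (binom_conv (int k) a)"
    by (simp add: binom_conv_binom_conv[OF above])
  moreover have "binom_conv_rev n b = binom_conv_rev (n - int k) (binom_conv_rev (int k) b)"
    by (simp add: binom_conv_rev_binom_conv_rev[OF below])
  moreover have "binom_conv_rev (int k) b = binom_conv (int k) a"
    unfolding eq by (rule binom_conv_of_nat_eq_rev[symmetric])
  ultimately have "binom_conv n a m - binom_conv_rev n b m
      = series_comb (\<lambda>t. (1 + fls_X) powi (t - m - 1)) (binom_conv (int k) a) (- (n - int k) - 1)"
    using binom_conv_diff_rev[OF binom_conv_finite_support[OF above below eq]] by simp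
  then show ?thesis
    unfolding series_comb_def fls_X_powi_times_nth by (simp add: algebra_simps)
qed

lemma series_mult_expm1_powi_iff:
  fixes c \<Phi> :: "int \<Rightarrow> 'b"
  assumes below: "\<And>j. j < J \<Longrightarrow> c j = 0" and supp: "finite {t. \<Phi> t \<noteq> 0}"
  shows "series_mult (expm1_fls powi k) c = series_comb exp_fls \<Phi>
     \<longleftrightarrow> c = series_comb (\<lambda>t. expm1_fls powi (- k) * exp_fls t) \<Phi>"
proof -
  have inv: "expm1_fls powi (- k) * expm1_fls powi k = (1 :: 'a fls)"
    and inv': "expm1_fls powi k * expm1_fls powi (- k) = (1 :: 'a fls)"
    using expm1_fps_nonzero by (simp_all add: power_int_minus)
  show ?thesis
  proof
    assume "series_mult (expm1_fls powi k) c = series_comb exp_fls \<Phi>"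
    then have "series_mult (expm1_fls powi (- k)) (series_mult (expm1_fls powi k) c)
        = series_comb (\<lambda>t. expm1_fls powi (- k) * exp_fls t) \<Phi>"
      by (simp only: series_mult_comb[OF supp])
    then show "c = series_comb (\<lambda>t. expm1_fls powi (- k) * exp_fls t) \<Phi>"
      by (simp only: series_mult_series_mult[OF below] inv series_mult_1)
  next
    assume "c = series_comb (\<lambda>t. expm1_fls powi (- k) * exp_fls t) \<Phi>"
    then show "series_mult (expm1_fls powi k) c = series_comb exp_fls \<Phi>"
      by (simp only: series_mult_comb[OF supp] mult.assoc[symmetric] inv' mult_1_left)
  qed
qed

lemma series_subst_ln1p_iff:
  fixes c \<Phi> :: "int \<Rightarrow> 'b"
  assumes below: "\<And>j. j < J \<Longrightarrow> c j = 0" and supp: "finite {t. \<Phi> t \<noteq> 0}"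
  shows "series_subst ln1p_fps c = series_comb (\<lambda>t. fls_X powi (- k) * (1 + fls_X) powi t) \<Phi>
     \<longleftrightarrow> c = series_comb (\<lambda>t. expm1_fls powi (- k) * exp_fls t) \<Phi>"
proof
  assume "series_subst ln1p_fps c = series_comb (\<lambda>t. fls_X powi (- k) * (1 + fls_X) powi t) \<Phi>"
  then have "series_subst expm1_fps (series_subst ln1p_fps c)
      = series_comb (\<lambda>t. expm1_fls powi (- k) * exp_fls t) \<Phi>"
    by (simp only: series_subst_comb[OF expm1_fps_nth_0 expm1_fps_nth_1 supp]
        X_powi_one_plus_X_compose_expm1)
  then show "c = series_comb (\<lambda>t. expm1_fls powi (- k) * exp_fls t) \<Phi>"
    by (simp only: series_subst_inverse[OF ln1p_compose_expm1 expm1_fps_nth_0 expm1_fps_nth_1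
        ln1p_fps_nth_0 ln1p_fps_nth_1 below])
next
  assume "c = series_comb (\<lambda>t. expm1_fls powi (- k) * exp_fls t) \<Phi>"
  then show "series_subst ln1p_fps c = series_comb (\<lambda>t. fls_X powi (- k) * (1 + fls_X) powi t) \<Phi>"
    by (simp only: series_subst_comb[OF ln1p_fps_nth_0 ln1p_fps_nth_1 supp]
        expm1_powi_exp_compose_ln1p)
qed

lemma delta_identity_of_locality:
  fixes a b c :: "int \<Rightarrow> 'b"
  assumes above: "\<And>t. T < t \<Longrightarrow> a t = 0" and below: "\<And>t. t < M \<Longrightarrow> b t = 0"
    and below_c: "\<And>j. j < J \<Longrightarrow> c j = 0"
    and eq: "binom_conv (int k) a = binom_conv (int k) b"
    and subst: "series_mult (expm1_fls powi int k) c = series_comb exp_fls (binom_conv (int k) a)"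
  shows "binom_conv n a m - binom_conv_rev n b m
       = series_mult ((1 + fls_X) powi (- m - 1)) (series_subst ln1p_fps c) (- n - 1)"
proof -
  note supp = binom_conv_finite_support[of T a M b, OF above below eq]
  have subst_ln1p: "series_subst ln1p_fps c
      = series_comb (\<lambda>t. fls_X powi (- int k) * (1 + fls_X) powi t) (binom_conv (int k) a)"
    using series_mult_expm1_powi_iff[where J = J and c = c and k = "int k", OF below_c supp]
      series_subst_ln1p_iff[where J = J and c = c and k = "int k", OF below_c supp] subst by simp
  have powi_add: "fls_X powi (- int k) * (1 + fls_X :: 'a fls) powi (t - m - 1)
      = (1 + fls_X) powi (- m - 1) * (fls_X powi (- int k) * (1 + fls_X) powi t)" for t
  proof -
    have "(1 + fls_X :: 'a fls) $$ 0 \<noteq> 0" by simp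
    then have "(1 + fls_X :: 'a fls) \<noteq> 0" by (metis fls_zero_nth)
    then show ?thesis by (simp add: power_int_add[symmetric] algebra_simps)
  qed
  have "binom_conv n a m - binom_conv_rev n b m
      = series_comb (\<lambda>t. fls_X powi (- int k) * (1 + fls_X) powi (t - m - 1)) (binom_conv (int k) a) (- n - 1)"
    by (rule binom_conv_diff_rev_of_locality[of T a M b, OF above below eq])
  also have "\<dots> = series_mult ((1 + fls_X) powi (- m - 1)) (series_subst ln1p_fps c) (- n - 1)"
    by (simp only: powi_add subst_ln1p series_mult_comb[OF supp])
  finally show ?thesis .
qed

lemma locality_of_delta_identity:
  fixes a b c :: "int \<Rightarrow> 'b"
  assumes below_c: "\<And>j. j < J \<Longrightarrow> c j = 0" and k: "- J \<le> int k"
    and delta: "\<And>n m. binom_conv n a m - binom_conv_rev n b m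
       = series_mult ((1 + fls_X) powi (- m - 1)) (series_subst ln1p_fps c) (- n - 1)"
  shows "binom_conv (int k) a = binom_conv (int k) b"
proof
  fix m
  have "series_subst ln1p_fps c s = 0" if "s < J" for s
    using series_subst_eq_0_below[OF ln1p_fps_nth_0 ln1p_fps_nth_1 below_c that] .
  moreover have "0 \<le> fls_subdegree ((1 + fls_X :: 'a fls) powi (- m - 1))"
    by (simp add: one_plus_fls_X_powi_eq fls_subdegree_fls_to_fps_gt0)
  ultimately have "series_mult ((1 + fls_X) powi (- m - 1)) (series_subst ln1p_fps c) (- int k - 1) = 0"
    using k by (intro series_mult_eq_0_below[of J]) auto
  then show "binom_conv (int k) a m = binom_conv (int k) b m"
    using delta[of "int k" m] by (simp add: binom_conv_of_nat_eq_rev)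
qed

lemma expm1_substitution_of_delta_identity:
  fixes a b c :: "int \<Rightarrow> 'b"
  assumes above: "\<And>t. T < t \<Longrightarrow> a t = 0" and below: "\<And>t. t < M \<Longrightarrow> b t = 0"
    and below_c: "\<And>j. j < J \<Longrightarrow> c j = 0"
    and eq: "binom_conv (int k) a = binom_conv (int k) b"
    and delta: "\<And>n. binom_conv n a (- 1) - binom_conv_rev n b (- 1)
       = series_mult 1 (series_subst ln1p_fps c) (- n - 1)"
  shows "series_mult (expm1_fls powi int k) c = series_comb exp_fls (binom_conv (int k) a)"
proof -
  note supp = binom_conv_finite_support[of T a M b, OF above below eq]
  have "series_subst ln1p_fps c s
      = series_comb (\<lambda>t. fls_X powi (- int k) * (1 + fls_X) powi t) (binom_conv (int k) a) s" for s
    using delta[of "- s - 1"] binom_conv_diff_rev_of_locality[of T a M b, OF above below eq, of "- s - 1" "- 1"]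
    by (simp add: series_mult_1)
  then show ?thesis
    using series_mult_expm1_powi_iff[where J = J and c = c and k = "int k", OF below_c supp]
      series_subst_ln1p_iff[where J = J and c = c and k = "int k", OF below_c supp] by auto
qed

lemma delta_identity_iff_locality:
  fixes a b c :: "'i \<Rightarrow> int \<Rightarrow> 'b"
  assumes above: "\<And>i. \<exists>T. \<forall>t>T. a i t = 0" and below: "\<And>i. \<exists>M. \<forall>t<M. b i t = 0"
    and below_c: "\<And>i j. j < J \<Longrightarrow> c i j = 0"
  shows "(\<exists>k. (\<forall>i. binom_conv (int k) (a i) = binom_conv (int k) (b i))
            \<and> (\<forall>i. series_mult (expm1_fls powi int k) (c i) = series_comb exp_fls (binom_conv (int k) (a i))))
     \<longleftrightarrow> (\<forall>i n m. binom_conv n (a i) m - binom_conv_rev n (b i) m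
            = series_mult ((1 + fls_X) powi (- m - 1)) (series_subst ln1p_fps (c i)) (- n - 1))"
    (is "(\<exists>k. ?loc k \<and> ?subst k) \<longleftrightarrow> ?delta")
proof
  assume "\<exists>k. ?loc k \<and> ?subst k"
  then obtain k where loc: "?loc k" and subst: "?subst k" by blast
  show ?delta
  proof (intro allI)
    fix i n m
    obtain T M where "\<forall>t>T. a i t = 0" "\<forall>t<M. b i t = 0"
      using above below by blast
    then show "binom_conv n (a i) m - binom_conv_rev n (b i) m
        = series_mult ((1 + fls_X) powi (- m - 1)) (series_subst ln1p_fps (c i)) (- n - 1)"
      using loc subst below_c by (intro delta_identity_of_locality[where T = T and M = M and J = J]) auto
  qed
next
  assume delta: ?delta
  define k where "k = nat (- J)"
  have loc: "?loc k"
  proof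
    fix i
    show "binom_conv (int k) (a i) = binom_conv (int k) (b i)"
      by (rule locality_of_delta_identity[where J = J]) (use below_c delta in \<open>auto simp: k_def\<close>)
  qed
  moreover have "?subst k"
  proof
    fix i
    obtain T M where "\<forall>t>T. a i t = 0" "\<forall>t<M. b i t = 0"
      using above below by blast
    then show "series_mult (expm1_fls powi int k) (c i) = series_comb exp_fls (binom_conv (int k) (a i))"
      using loc below_c delta
      by (intro expm1_substitution_of_delta_identity[where T = T and M = M and J = J]) (auto simp: series_mult_1)
  qed
  ultimately show "\<exists>k. ?loc k \<and> ?subst k" by blast
qed

end

section \<open>Translation of the coefficient encoding\<close>

lemma mult2_shift_y: "mult2 scale (shift_y r f) g m p = mult2 scale f g m (p - r)"
proof -
  have "mult2 scale (shift_y r f) g m p = Sum_any ((\<lambda>(a, b). scale (f a b) (g (m - a) (p - r - b))) \<circ> (\<lambda>(a, b). (a, b - r)))"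
    unfolding mult2_def shift_y_def by (intro Sum_any.cong) (auto simp: algebra_simps)
  also have "\<dots> = mult2 scale f g m (p - r)"
    unfolding mult2_def
    by (rule Sum_any.reindex_cong[symmetric, of "\<lambda>(a, b). (a, b - r)"])
       (auto simp: bij_def inj_def image_def, presburger)
  finally show ?thesis .
qed

locale complex_series_space = series_space_char_0 scale for scale :: "complex \<Rightarrow> 'b::ab_group_add \<Rightarrow> 'b"
begin

lemma mult2_binom_xy: "mult2 scale (binom_xy n) g m p = binom_conv n (\<lambda>s. g s (m + p - n - s)) m"
proof -
  have "mult2 scale (binom_xy n) g m p = Sum_any (\<lambda>i. (\<lambda>(a, b). scale (binom_xy n a b) (g (m - a) (p - b))) (n - i, i))"
    unfolding mult2_def by (rule Sum_any_on_graph) (auto simp: binom_xy_def)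
  then show ?thesis
    by (simp add: binom_conv_def binom_xy_def alt_binom_def algebra_simps)
qed

lemma mult2_binom_yx:
  "mult2 scale (\<lambda>a b. (-1) powi n * binom_yx n a b) g m p = binom_conv_rev n (\<lambda>s. g s (m + p - n - s)) m"
proof -
  have "mult2 scale (\<lambda>a b. (-1) powi n * binom_yx n a b) g m p
      = Sum_any (\<lambda>b. (\<lambda>(a, b). scale ((-1) powi n * binom_yx n a b) (g (m - a) (p - b))) (n - b, b))"
    unfolding mult2_def by (rule Sum_any_on_graph) (auto simp: binom_yx_def)
  also have "\<dots> = Sum_any (\<lambda>i. scale ((-1) powi n * binom_yx n i (n - i)) (g (m - i) (p - n + i)))"
    using Sum_any_int_reflect[of "\<lambda>b. scale ((-1) powi n * binom_yx n (n - b) b) (g (m - n + b) (p - b))" n]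
    by (simp add: algebra_simps)
  finally show ?thesis
    by (simp add: binom_conv_rev_def binom_yx_def alt_binom_def algebra_simps)
qed

lemma delta_term1_eq: "delta_term1 scale A w r m p = binom_conv (- r - 1) (\<lambda>s. A s (m + p + 1 - s) w) m"
  by (simp add: delta_term1_def mult2_shift_y mult2_binom_xy algebra_simps)

lemma delta_term2_eq: "delta_term2 scale B w r m p = binom_conv_rev (- r - 1) (\<lambda>s. B s (m + p + 1 - s) w) m"
proof -
  have "(\<lambda>a b. (-1) powi (- r - 1) * shift_y r (binom_yx (- r - 1)) a b)
      = shift_y r (\<lambda>a b. (-1) powi (- r - 1) * binom_yx (- r - 1) a b)"
    by (simp add: shift_y_def fun_eq_iff)
  then have "delta_term2 scale B w r m p
      = mult2 scale (\<lambda>a b. (-1) powi (- r - 1) * binom_yx (- r - 1) a b) (\<lambda>a b. B a b w) m (p - r)"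
    unfolding delta_term2_def by (simp only: mult2_shift_y)
  also have "\<dots> = binom_conv_rev (- r - 1) (\<lambda>s. B s (m + (p - r) - (- r - 1) - s) w) m"
    by (rule mult2_binom_yx)
  finally show ?thesis by (simp add: algebra_simps)
qed

lemma delta_rhs_eq:
  "delta_rhs scale C w r m p
     = series_mult ((1 + fls_X) powi (- m - 1)) (series_subst ln1p_fps (\<lambda>j. C j (m + p + 1) w)) r"
  unfolding delta_rhs_def series_mult_def series_subst_def C_log_def log1p_fls_def Let_def
  using Sum_any_int_reflect[of "\<lambda>l. scale (((1 + fls_X) powi (- m - 1)) $$ l)
      (Sum_any (\<lambda>j. scale ((fps_to_fls ln1p_fps powi j) $$ (r - l)) (C j (m + p + 1) w)))" r]
  by (simp add: algebra_simps)

lemma subst_exp_eq: "subst_exp scale D j q = series_comb exp_fls (\<lambda>t. D t (q - t)) j"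
  by (simp add: subst_exp_def series_comb_def exp_fls_nth)

lemma exp_rhs_eq: "exp_rhs scale k C w j q = series_mult (expm1_fls powi int k) (\<lambda>j. C j (q - int k) w) j"
  by (simp add: exp_rhs_def series_mult_def fps_to_fls_power)

lemma mult2_binom_xy_eq_iff:
  "(\<forall>m p. mult2 scale (binom_xy (int k)) (\<lambda>a b. A a b w) m p
          = mult2 scale (binom_xy (int k)) (\<lambda>a b. B a b w) m p)
   \<longleftrightarrow> (\<forall>q. binom_conv (int k) (\<lambda>s. A s (q - s) w) = binom_conv (int k) (\<lambda>s. B s (q - s) w))"
proof (intro iffI allI)
  fix q
  assume loc: "\<forall>m p. mult2 scale (binom_xy (int k)) (\<lambda>a b. A a b w) m p
          = mult2 scale (binom_xy (int k)) (\<lambda>a b. B a b w) m p"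
  show "binom_conv (int k) (\<lambda>s. A s (q - s) w) = binom_conv (int k) (\<lambda>s. B s (q - s) w)"
  proof
    fix t
    show "binom_conv (int k) (\<lambda>s. A s (q - s) w) t = binom_conv (int k) (\<lambda>s. B s (q - s) w) t"
      using loc[rule_format, of t "q + int k - t"] by (simp add: mult2_binom_xy)
  qed
next
  fix m p
  assume "\<forall>q. binom_conv (int k) (\<lambda>s. A s (q - s) w) = binom_conv (int k) (\<lambda>s. B s (q - s) w)"
  then show "mult2 scale (binom_xy (int k)) (\<lambda>a b. A a b w) m p
      = mult2 scale (binom_xy (int k)) (\<lambda>a b. B a b w) m p"
    by (simp only: mult2_binom_xy)
qed

lemma subst_exp_eq_exp_rhs_iff:
  "(\<forall>j q. subst_exp scale (mult2 scale (binom_xy (int k)) (\<lambda>a b. A a b w)) j q = exp_rhs scale k C w j q)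
   \<longleftrightarrow> (\<forall>q. series_mult (expm1_fls powi int k) (\<lambda>j. C j q w)
          = series_comb exp_fls (binom_conv (int k) (\<lambda>s. A s (q - s) w)))"
proof (intro iffI allI)
  fix q
  assume subst: "\<forall>j q. subst_exp scale (mult2 scale (binom_xy (int k)) (\<lambda>a b. A a b w)) j q
      = exp_rhs scale k C w j q"
  show "series_mult (expm1_fls powi int k) (\<lambda>j. C j q w)
      = series_comb exp_fls (binom_conv (int k) (\<lambda>s. A s (q - s) w))"
  proof
    fix j
    show "series_mult (expm1_fls powi int k) (\<lambda>j. C j q w) j
        = series_comb exp_fls (binom_conv (int k) (\<lambda>s. A s (q - s) w)) j"
      using subst[rule_format, of j "q + int k"]
      by (simp add: subst_exp_eq exp_rhs_eq mult2_binom_xy del: fps_to_fls_power)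
  qed
next
  fix j q
  assume "\<forall>q. series_mult (expm1_fls powi int k) (\<lambda>j. C j q w)
      = series_comb exp_fls (binom_conv (int k) (\<lambda>s. A s (q - s) w))"
  then show "subst_exp scale (mult2 scale (binom_xy (int k)) (\<lambda>a b. A a b w)) j q = exp_rhs scale k C w j q"
    by (auto simp: fun_eq_iff subst_exp_eq exp_rhs_eq mult2_binom_xy dest: spec[of _ "q - int k"])
qed

lemma delta_terms_eq_delta_rhs_iff:
  "(\<forall>r m p. delta_term1 scale A w r m p - delta_term2 scale B w r m p = delta_rhs scale C w r m p)
   \<longleftrightarrow> (\<forall>q n m. binom_conv n (\<lambda>s. A s (q - s) w) m - binom_conv_rev n (\<lambda>s. B s (q - s) w) m
          = series_mult ((1 + fls_X) powi (- m - 1)) (series_subst ln1p_fps (\<lambda>j. C j q w)) (- n - 1))"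
proof (intro iffI allI)
  fix q n m
  assume delta: "\<forall>r m p. delta_term1 scale A w r m p - delta_term2 scale B w r m p
      = delta_rhs scale C w r m p"
  show "binom_conv n (\<lambda>s. A s (q - s) w) m - binom_conv_rev n (\<lambda>s. B s (q - s) w) m
      = series_mult ((1 + fls_X) powi (- m - 1)) (series_subst ln1p_fps (\<lambda>j. C j q w)) (- n - 1)"
    using delta[rule_format, of "- n - 1" m "q - m - 1"]
    by (simp add: delta_term1_eq delta_term2_eq delta_rhs_eq)
next
  fix r m p
  assume "\<forall>q n m. binom_conv n (\<lambda>s. A s (q - s) w) m - binom_conv_rev n (\<lambda>s. B s (q - s) w) m
      = series_mult ((1 + fls_X) powi (- m - 1)) (series_subst ln1p_fps (\<lambda>j. C j q w)) (- n - 1)"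
  then show "delta_term1 scale A w r m p - delta_term2 scale B w r m p = delta_rhs scale C w r m p"
    by (auto simp: delta_term1_eq delta_term2_eq delta_rhs_eq dest: spec[of _ "m + p + 1"] spec[of _ "- r - 1"])
qed

end

theorem lemma5p8:
  fixes scale :: "complex \<Rightarrow> 'w::ab_group_add \<Rightarrow> 'w"
    and A B C :: "int \<Rightarrow> int \<Rightarrow> 'w \<Rightarrow> 'w"
  assumes W: "vector_space scale"
    and A_lin: "\<And>m p. Vector_Spaces.linear scale scale (A m p)"
    and B_lin: "\<And>m p. Vector_Spaces.linear scale scale (B m p)"
    and C_lin: "\<And>j q. Vector_Spaces.linear scale scale (C j q)"
    \<comment> \<open>A(x1,x2) in Hom(W, W((x1))((x2)))\<close>
    and A_trunc2: "\<And>w. \<exists>P. \<forall>p<P. \<forall>m. A m p w = 0"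
    and A_trunc1: "\<And>w p. \<exists>M. \<forall>m<M. A m p w = 0"
    \<comment> \<open>B(x1,x2) in Hom(W, W((x2))((x1)))\<close>
    and B_trunc1: "\<And>w. \<exists>M. \<forall>m<M. \<forall>p. B m p w = 0"
    and B_trunc2: "\<And>w m. \<exists>P. \<forall>p<P. B m p w = 0"
    \<comment> \<open>C(x0,x2) in (Hom(W, W((x2))))((x0))\<close>
    and C_trunc0: "\<exists>J. \<forall>j<J. \<forall>q w. C j q w = 0"
    and C_trunc2: "\<And>w j. \<exists>Q. \<forall>q<Q. C j q w = 0"
  shows "(\<exists>k::nat.
            (\<forall>w m p. mult2 scale (binom_xy (int k)) (\<lambda>a b. A a b w) m p
                    = mult2 scale (binom_xy (int k)) (\<lambda>a b. B a b w) m p)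
          \<and> (\<forall>w j q. subst_exp scale (mult2 scale (binom_xy (int k)) (\<lambda>a b. A a b w)) j q
                    = exp_rhs scale k C w j q))
       \<longleftrightarrow>
         (\<forall>w r m p. delta_term1 scale A w r m p - delta_term2 scale B w r m p
                    = delta_rhs scale C w r m p)"
proof -
  interpret complex_series_space scale
    unfolding complex_series_space_def series_space_char_0_def series_space_def by (rule W)
  obtain J where J: "\<forall>j<J. \<forall>q w. C j q w = 0"
    using C_trunc0 by blast
  have A_above: "\<exists>T. \<forall>t>T. A t (q - t) w = 0" for w q
  proof -
    obtain P where "\<forall>p<P. \<forall>m. A m p w = 0" using A_trunc2 by blast
    then have "\<forall>t>q - P. A t (q - t) w = 0" by simp
    then show ?thesis ..
  qed
  have B_below: "\<exists>M. \<forall>t<M. B t (q - t) w = 0" for w q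
    using B_trunc1[of w] by blast
  show ?thesis
    unfolding mult2_binom_xy_eq_iff subst_exp_eq_exp_rhs_iff delta_terms_eq_delta_rhs_iff
    using delta_identity_iff_locality[where a = "\<lambda>(w, q) s. A s (q - s) w"
        and b = "\<lambda>(w, q) s. B s (q - s) w" and c = "\<lambda>(w, q) j. C j q w" and J = J]
      A_above B_below J
    unfolding split_paired_All split_paired_all case_prod_conv by blast
qed

end
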